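(* Let $\alpha,\beta\in(0,1)$ with $\alpha(1+\beta)>1$, let $V,W$ be separable Banach spaces with $W$ compactly embedded in $V$, and let $A\in C^{\alpha}_t C^{\beta}_{V,W}$. Then for any $s\in[0,T)$ and any $x_s\in V$ there exists a solution to the YDE \[ x_t = x_s + \int_s^t A(\mathrm{d} r, x_r)\qquad \forall\, t\in[s,T], \] i.e. a path $x\in C^{\gamma}([s,T];V)$ for some $\gamma$ with $\alpha+\beta\gamma>1$ satisfying this identity (the integral takes values in $W\subset V$).
   Context: Fix $T>0$. For a path $f:[0,T]\to E$ ($E$ a Banach space) write $f_{s,t}:=f_t-f_s$, $\llbracket f\rrbracket_{\gamma}:=\sup_{0\le s<t\le T}\|f_{s,t}\|_E/|t-s|^{\gamma}$, $\|f\|_\infty=\sup_t\|f_t\|_E$, $\|f\|_\gamma=\|f\|_\infty+\llbracket f\rrbracket_\gamma$, and $C^\gamma_tE$ (or $C^\gamma([s,t];E)$ on a subinterval) is the space of paths with finite $\|\cdot\|_\gamma$. For $g:V\to W$ and $\beta\in(0,1)$ let $\llbracket g\rrbracket_\beta=\sup_{x\neq y}\|g(x)-g(y)\|_W/\|x-y\|_V^\beta$ and $\|g\|_\beta=\llbracket g\rrbracket_\beta+\sup_x\|g(x)\|_W$. All fields $A:[0,T]\times V\to W$ satisfy $A(0,\cdot)=0$ and we write $A_{s,t}(x):=A(t,x)-A(s,x)$. $A\in C^\alpha_tC^\beta_{V,W}$ means $\|A\|_{\alpha,\beta}:=\sup_{0\le s<t\le T}\|A_{s,t}\|_\beta/|t-s|^\alpha<\infty$.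 For such $A$ and $x\in C^\gamma_tV$ with $\alpha+\beta\gamma>1$, the nonlinear Young integral is $\int_s^tA(\mathrm{d} r,x_r):=\lim_{|\Pi|\to0}\sum_iA_{t_i,t_{i+1}}(x_{t_i})$, the limit over partitions $\Pi=\{t_i\}$ of $[s,t]$ with mesh $|\Pi|\to0$; it exists and does not depend on the chosen partitions. *)

theory Defs
  imports "HOL-Analysis.Analysis"
begin

definition separable_type :: "'a::metric_space itself \<Rightarrow> bool" where
  "separable_type _ \<longleftrightarrow> (\<exists>D::'a set. countable D \<and> closure D = UNIV)"

definition compact_embedding :: "('w::real_normed_vector \<Rightarrow> 'v::real_normed_vector) \<Rightarrow> bool" where
  "compact_embedding \<iota> \<longleftrightarrow> bounded_linear \<iota> \<and> inj \<iota> \<and> compact (closure (\<iota> ` ball 0 1))"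

definition holder_field ::
  "real \<Rightarrow> real \<Rightarrow> real \<Rightarrow> (real \<Rightarrow> 'v::real_normed_vector \<Rightarrow> 'w::real_normed_vector) \<Rightarrow> bool" where
  "holder_field T \<alpha> \<beta> A \<longleftrightarrow> (\<forall>x. A 0 x = 0) \<and>
     (\<exists>C. \<forall>s\<in>{0..T}. \<forall>t\<in>{0..T}. s < t \<longrightarrow>
        (SUP x. norm (A t x - A s x)) + (SUP p\<in>{(x,y). x \<noteq> y}. norm ((A t (fst p) - A s (fst p)) - (A t (snd p) - A s (snd p))) / norm (fst p - snd p) powr \<beta>)
          \<le> C * (t - s) powr \<alpha>
        \<and> bdd_above (range (\<lambda>x. norm (A t x - A s x)))
        \<and> bdd_above ((\<lambda>(x,y). norm ((A t x - A s x) - (A t y - A s y)) / norm (x - y) powr \<beta>) ` {(x,y). x \<noteq> y}))"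

definition is_partition :: "real list \<Rightarrow> real \<Rightarrow> real \<Rightarrow> bool" where
  "is_partition P s t \<longleftrightarrow> P \<noteq> [] \<and> sorted_wrt (<) P \<and> hd P = s \<and> last P = t"

definition mesh :: "real list \<Rightarrow> real" where
  "mesh P = foldr max (map (\<lambda>(a,b). b - a) (zip P (tl P))) 0"

definition young_sum ::
  "(real \<Rightarrow> 'v \<Rightarrow> 'w::real_normed_vector) \<Rightarrow> (real \<Rightarrow> 'v) \<Rightarrow> real list \<Rightarrow> 'w" where
  "young_sum A x P = sum_list (map (\<lambda>(a,b). A b (x a) - A a (x a)) (zip P (tl P)))"

definition has_young_integral ::
  "(real \<Rightarrow> 'v \<Rightarrow> 'w::real_normed_vector) \<Rightarrow> (real \<Rightarrow> 'v) \<Rightarrow> real \<Rightarrow> real \<Rightarrow> 'w \<Rightarrow> bool" where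
  "has_young_integral A x s t I \<longleftrightarrow>
     (\<forall>\<epsilon>>0. \<exists>\<delta>>0. \<forall>P. is_partition P s t \<and> mesh P < \<delta> \<longrightarrow> norm (young_sum A x P - I) < \<epsilon>)"

definition holder_path :: "real \<Rightarrow> real \<Rightarrow> real \<Rightarrow> (real \<Rightarrow> 'v::real_normed_vector) \<Rightarrow> bool" where
  "holder_path \<gamma> s T x \<longleftrightarrow> (\<exists>C. \<forall>u\<in>{s..T}. \<forall>v\<in>{s..T}.
      norm (x u) \<le> C \<and> norm (x v - x u) \<le> C * \<bar>v - u\<bar> powr \<gamma>)"

end

theory Submission
  imports Defs
begin

text \<open>Euler approximations on finite grids satisfy the Davie expansion
  \<open>x\<^sub>u\<^sub>,\<^sub>v = A\<^sub>u\<^sub>,\<^sub>v(x\<^sub>u) + O(|v - u|\<^sup>\<theta>)\<close>, \<open>\<theta> = \<alpha>(1 + \<beta>) > 1\<close>, with a constant independent of the grid: the sewing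
  lemma bounds the best such constant \<open>N\<close> by \<open>a (C + N T\<^sup>\<alpha>\<^sup>\<beta>)\<^sup>\<beta>\<close>, and \<open>\<beta> < 1\<close> turns this into an a priori
  bound. The approximations take values in \<open>x\<^sub>s + \<iota>(ball)\<close>, which is relatively compact since the
  embedding is compact. By Tychonoff's theorem the net of approximations, indexed by finite sets of
  times, has a cluster point in the space of all paths, and the expansion passes to it because it
  constrains only two coordinates at a time. The expansion then makes the limit \<open>\<alpha>\<close>-Holder and, by
  sewing once more, identifies its increments with \<open>\<iota>\<close> of the nonlinear Young integral.\<close>

section \<open>Germ sums over partitions\<close>

definition germ_sum :: "(real \<Rightarrow> real \<Rightarrow> 'a::monoid_add) \<Rightarrow> real list \<Rightarrow> 'a" where
  "germ_sum \<Xi> P = sum_list (map (\<lambda>(a, b). \<Xi> a b) (zip P (tl P)))"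

lemma germ_sum_Nil [simp]: "germ_sum \<Xi> [] = 0"
  and germ_sum_singleton [simp]: "germ_sum \<Xi> [a] = 0"
  and germ_sum_Cons_Cons [simp]: "germ_sum \<Xi> (a # b # P) = \<Xi> a b + germ_sum \<Xi> (b # P)"
  by (simp_all add: germ_sum_def)

lemma germ_sum_append:
  "L \<noteq> [] \<Longrightarrow> R \<noteq> [] \<Longrightarrow>
    germ_sum \<Xi> (L @ R) = germ_sum \<Xi> L + \<Xi> (last L) (hd R) + germ_sum (\<Xi> :: _ \<Rightarrow> _ \<Rightarrow> 'a::comm_monoid_add) R"
proof (induction L rule: induct_list012)
  case (2 a)
  then show ?case by (cases R) simp_all
next
  case (3 a b L)
  then show ?case by (simp add: ac_simps)
qed simp

lemma germ_sum_telescope: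
  "P \<noteq> [] \<Longrightarrow> germ_sum (\<lambda>a b. f b - f a) P = f (last P) - (f (hd P) :: 'a::ab_group_add)"
  by (induction P rule: induct_list012) auto

lemma germ_sum_diff:
  "germ_sum (\<lambda>a b. F a b - G a b) P = germ_sum F P - (germ_sum G P :: 'a::ab_group_add)"
  by (induction P rule: induct_list012) (simp_all add: algebra_simps)

lemma germ_sum_scale: "germ_sum (\<lambda>a b. c * F a b) P = (c::real) * germ_sum F P"
  by (induction P rule: induct_list012) (simp_all add: algebra_simps)

lemma germ_sum_linear: "linear f \<Longrightarrow> f (germ_sum \<Xi> P) = germ_sum (\<lambda>a b. f (\<Xi> a b)) P"
  by (induction P rule: induct_list012) (simp_all add: linear_0 linear_add)

lemma norm_germ_sum_le: "norm (germ_sum \<Xi> P) \<le> germ_sum (\<lambda>a b. norm (\<Xi> a b)) P"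
  by (induction P rule: induct_list012) (auto intro: norm_triangle_le add_left_mono)

lemma germ_sum_mono:
  "(\<And>a b. (a, b) \<in> set (zip P (tl P)) \<Longrightarrow> F a b \<le> G a b) \<Longrightarrow> germ_sum F P \<le> (germ_sum G P :: real)"
  by (induction P rule: induct_list012) (auto intro: add_mono)

lemma young_sum_eq_germ_sum: "young_sum A x P = germ_sum (\<lambda>a b. A b (x a) - A a (x a)) P"
  by (simp add: young_sum_def germ_sum_def)

lemma sorted_wrt_less_bounds:
  assumes "sorted_wrt (<) P" "x \<in> set P"
  shows "hd P \<le> x" "x \<le> (last P :: real)"
proof -
  have "P \<noteq> []" using assms(2) by auto
  then have P: "P = butlast P @ [last P]" by simp
  have "x \<in> set (butlast P) \<or> x = last P" using assms(2) by (subst (asm) P) auto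
  moreover have "y < last P" if "y \<in> set (butlast P)" for y
    using assms(1) that by (subst (asm) P) (auto simp: sorted_wrt_append)
  ultimately show "x \<le> last P" by fastforce
  show "hd P \<le> x" using assms by (cases P) auto
qed

lemma sorted_wrt_less_hd_less_last:
  "sorted_wrt (<) P \<Longrightarrow> 2 \<le> length P \<Longrightarrow> hd P < (last P :: real)"
  by (cases P) (auto simp: last_in_set)

lemma sorted_wrt_less_hd_eq_last:
  "sorted_wrt (<) P \<Longrightarrow> P \<noteq> [] \<Longrightarrow> hd P = (last P :: real) \<Longrightarrow> P = [hd P]"
  using sorted_wrt_less_hd_less_last[of P] by (cases P; cases "tl P") auto

lemma sorted_wrt_less_split:
  assumes "sorted_wrt (<) P" "P \<noteq> []" "hd P \<le> c" "c < (last P :: real)"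
  obtains L R where "P = L @ R" "L \<noteq> []" "R \<noteq> []" "last L \<le> c" "c < hd R"
proof
  let ?L = "takeWhile (\<lambda>t. t \<le> c) P" and ?R = "dropWhile (\<lambda>t. t \<le> c) P"
  show "P = ?L @ ?R" by simp
  show "?L \<noteq> []" using assms(2,3) by (cases P) auto
  then show "last ?L \<le> c" by (metis last_in_set set_takeWhileD)
  show R: "?R \<noteq> []" using assms(2,4) by (auto simp: dropWhile_eq_Nil_conv intro!: bexI[of _ "last P"])
  then show "c < hd ?R" using hd_dropWhile not_le by metis
qed

lemma zip_tl_less: "sorted_wrt (<) P \<Longrightarrow> (a, b) \<in> set (zip P (tl P)) \<Longrightarrow> a < b"
  by (induction P rule: induct_list012) auto

lemma zip_tl_in_set: "(a, b) \<in> set (zip P (tl P)) \<Longrightarrow> a \<in> set P \<and> b \<in> set P"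
  by (cases P) (auto dest: set_zip_leftD set_zip_rightD)

lemma is_partition_subset: "is_partition P a b \<Longrightarrow> set P \<subseteq> {a..b}"
  unfolding is_partition_def using sorted_wrt_less_bounds by fastforce

lemma mesh_nonneg: "0 \<le> mesh P"
proof -
  have "0 \<le> foldr max xs (0::real)" for xs by (induction xs) auto
  then show ?thesis unfolding mesh_def .
qed

lemma mesh_ge: "(a, b) \<in> set (zip P (tl P)) \<Longrightarrow> b - a \<le> mesh P"
proof -
  have "x \<in> set xs \<Longrightarrow> x \<le> foldr max xs (0::real)" for x xs by (induction xs) auto
  then show "(a, b) \<in> set (zip P (tl P)) \<Longrightarrow> b - a \<le> mesh P" unfolding mesh_def by force
qed

lemma mesh_le:
  assumes "\<And>a b. (a, b) \<in> set (zip P (tl P)) \<Longrightarrow> b - a \<le> h" "0 \<le> h"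
  shows "mesh P \<le> h"
proof -
  have "\<forall>x\<in>set xs. x \<le> h \<Longrightarrow> foldr max xs (0::real) \<le> h" for xs using assms(2) by (induction xs) auto
  then show ?thesis unfolding mesh_def by (rule rev_mp) (use assms(1) in auto)
qed

lemma germ_sum_powr_le_mesh:
  assumes "1 < \<theta>" "sorted_wrt (<) P" "P \<noteq> []"
  shows "germ_sum (\<lambda>a b. (b - a) powr \<theta>) P \<le> mesh P powr (\<theta> - 1) * (last P - hd P)"
proof -
  have "germ_sum (\<lambda>a b. (b - a) powr \<theta>) P \<le> germ_sum (\<lambda>a b. mesh P powr (\<theta> - 1) * (b - a)) P"
  proof (rule germ_sum_mono)
    fix a b assume ab: "(a, b) \<in> set (zip P (tl P))"
    then have "a < b" using zip_tl_less assms(2) by blast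
    then have "(b - a) powr \<theta> = (b - a) powr (\<theta> - 1) * (b - a)" by (simp add: powr_diff)
    also have "\<dots> \<le> mesh P powr (\<theta> - 1) * (b - a)"
      using \<open>a < b\<close> assms(1) mesh_ge[OF ab] by (intro mult_right_mono powr_mono2) auto
    finally show "(b - a) powr \<theta> \<le> mesh P powr (\<theta> - 1) * (b - a)" .
  qed
  also have "\<dots> = mesh P powr (\<theta> - 1) * (last P - hd P)"
    by (simp add: germ_sum_scale germ_sum_telescope[OF assms(3), of id, simplified])
  finally show ?thesis .
qed

definition uniform_partition :: "real \<Rightarrow> real \<Rightarrow> nat \<Rightarrow> real list" where
  "uniform_partition a b n = map (\<lambda>k. a + real k * (b - a) / real (Suc n)) [0..<Suc (Suc n)]"

lemma is_partition_uniform_partition: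
  assumes "a < b"
  shows "is_partition (uniform_partition a b n) a b"
proof -
  have "real i * (b - a) / real (Suc n) < real j * (b - a) / real (Suc n)" if "i < j" for i j
    using that assms by (intro divide_strict_right_mono mult_strict_right_mono) auto
  then have "sorted_wrt (<) (uniform_partition a b n)"
    unfolding uniform_partition_def sorted_wrt_map
    by (intro sorted_wrt_mono_rel[OF _ sorted_wrt_upt]) simp
  moreover have "uniform_partition a b n \<noteq> []" by (simp add: uniform_partition_def)
  ultimately show ?thesis
    unfolding is_partition_def by (simp add: uniform_partition_def hd_map last_map del: upt_Suc)
qed

lemma mesh_uniform_partition: "a < b \<Longrightarrow> mesh (uniform_partition a b n) \<le> (b - a) / real (Suc n)"
proof (rule mesh_le)
  fix u v assume "(u, v) \<in> set (zip (uniform_partition a b n) (tl (uniform_partition a b n)))"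
  then obtain i where "i < Suc n" "u = a + real i * (b - a) / real (Suc n)"
    "v = a + real (Suc i) * (b - a) / real (Suc n)"
    by (auto simp: uniform_partition_def set_zip nth_tl simp del: upt_Suc)
  then show "v - u \<le> (b - a) / real (Suc n)" by (simp add: field_simps)
qed simp

lemma mesh_uniform_partition_tendsto:
  assumes "a < b"
  shows "(\<lambda>n. mesh (uniform_partition a b n)) \<longlonglongrightarrow> 0"
proof (rule tendsto_sandwich[of "\<lambda>_. 0" _ _ "\<lambda>n. (b - a) * inverse (real (Suc n))"])
  show "(\<lambda>n. (b - a) * inverse (real (Suc n))) \<longlonglongrightarrow> 0"
    using tendsto_mult_right_zero[OF LIMSEQ_inverse_real_of_nat] .
qed (use mesh_uniform_partition[OF assms] in \<open>simp_all add: mesh_nonneg divide_inverse\<close>)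

section \<open>The sewing lemma\<close>

definition delta_bounded :: "real set \<Rightarrow> real \<Rightarrow> real \<Rightarrow> (real \<Rightarrow> real \<Rightarrow> 'a::real_normed_vector) \<Rightarrow> bool" where
  "delta_bounded S \<theta> K \<Xi> \<longleftrightarrow> (\<forall>u\<in>S. \<Xi> u u = 0) \<and>
     (\<forall>u\<in>S. \<forall>m\<in>S. \<forall>v\<in>S. u < m \<longrightarrow> m < v \<longrightarrow> norm (\<Xi> u v - \<Xi> u m - \<Xi> m v) \<le> K * (v - u) powr \<theta>)"

lemma delta_bounded_le:
  assumes "delta_bounded S \<theta> K \<Xi>" "0 \<le> K" "u \<in> S" "m \<in> S" "v \<in> S" "u \<le> m" "m \<le> v"
  shows "norm (\<Xi> u v - \<Xi> u m - \<Xi> m v) \<le> K * (v - u) powr \<theta>"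
  using assms unfolding delta_bounded_def by (cases "u = m \<or> m = v") auto

text \<open>The fixed point of the bisection recursion \<open>c = 2\<^sup>1\<^sup>-\<^sup>\<theta> c + 2\<close>.\<close>

definition sewing_const :: "real \<Rightarrow> real" where
  "sewing_const \<theta> = 2 / (1 - 2 powr (1 - \<theta>))"

lemma sewing_const_pos: "1 < \<theta> \<Longrightarrow> 0 < sewing_const \<theta>"
  by (simp add: sewing_const_def powr_less_one)

lemma sewing_const_recursion:
  assumes "1 < \<theta>" "0 \<le> x"
  shows "2 * sewing_const \<theta> * (x / 2) powr \<theta> + 2 * x powr \<theta> = sewing_const \<theta> * x powr \<theta>"
proof -
  define q where "q = 2 powr (1 - \<theta>)"
  have q: "q < 1" using assms(1) unfolding q_def by (simp add: powr_less_one)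
  have "2 * (x / 2) powr \<theta> = q * x powr \<theta>"
    using assms(2) unfolding q_def by (simp add: powr_divide powr_diff)
  then have "2 * sewing_const \<theta> * (x / 2) powr \<theta> + 2 * x powr \<theta> = (2 * q / (1 - q) + 2) * x powr \<theta>"
    unfolding sewing_const_def q_def[symmetric] by (simp add: algebra_simps)
  also have "2 * q / (1 - q) + 2 = 2 / (1 - q)" using q by (simp add: field_simps)
  finally show ?thesis unfolding sewing_const_def q_def .
qed

lemma sewing_bisection_step:
  fixes \<Xi> :: "real \<Rightarrow> real \<Rightarrow> 'a::real_normed_vector"
  assumes \<theta>: "1 < \<theta>" and K: "0 \<le> K" and \<Xi>: "delta_bounded S \<theta> K \<Xi>"
    and pts: "a \<in> S" "m \<in> S" "m' \<in> S" "b \<in> S"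
    and ord: "a \<le> m" "m < m'" "m' \<le> b" "m \<le> (a + b) / 2" "(a + b) / 2 \<le> m'"
    and left: "norm (\<sigma>\<^sub>L - \<Xi> a m) \<le> sewing_const \<theta> * K * (m - a) powr \<theta>"
    and right: "norm (\<sigma>\<^sub>R - \<Xi> m' b) \<le> sewing_const \<theta> * K * (b - m') powr \<theta>"
  shows "norm (\<sigma>\<^sub>L + \<Xi> m m' + \<sigma>\<^sub>R - \<Xi> a b) \<le> sewing_const \<theta> * K * (b - a) powr \<theta>"
proof -
  let ?c = "sewing_const \<theta> * K"
  have "0 \<le> ?c" using sewing_const_pos[OF \<theta>] K by simp
  have halves: "?c * (m - a) powr \<theta> \<le> ?c * ((b - a) / 2) powr \<theta>"
    "?c * (b - m') powr \<theta> \<le> ?c * ((b - a) / 2) powr \<theta>"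
    using ord \<open>0 \<le> ?c\<close> \<theta> by (auto intro!: mult_left_mono powr_mono2)
  have \<delta>: "norm (\<Xi> a b - \<Xi> a m - \<Xi> m b) \<le> K * (b - a) powr \<theta>"
    "norm (\<Xi> m b - \<Xi> m m' - \<Xi> m' b) \<le> K * (b - a) powr \<theta>"
    using delta_bounded_le[OF \<Xi> K pts(1,2,4)] delta_bounded_le[OF \<Xi> K pts(2,3,4)]
      mult_left_mono[OF powr_mono2[of \<theta> "b - m" "b - a"] K] ord \<theta> by auto
  have "\<sigma>\<^sub>L + \<Xi> m m' + \<sigma>\<^sub>R - \<Xi> a b = (\<sigma>\<^sub>L - \<Xi> a m) + (\<sigma>\<^sub>R - \<Xi> m' b)
      - (\<Xi> a b - \<Xi> a m - \<Xi> m b) - (\<Xi> m b - \<Xi> m m' - \<Xi> m' b)"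
    by (simp add: algebra_simps)
  then have "norm (\<sigma>\<^sub>L + \<Xi> m m' + \<sigma>\<^sub>R - \<Xi> a b) \<le> norm (\<sigma>\<^sub>L - \<Xi> a m) + norm (\<sigma>\<^sub>R - \<Xi> m' b)
      + norm (\<Xi> a b - \<Xi> a m - \<Xi> m b) + norm (\<Xi> m b - \<Xi> m m' - \<Xi> m' b)"
    by (smt (verit) norm_triangle_ineq norm_triangle_ineq4)
  also have "\<dots> \<le> K * (2 * sewing_const \<theta> * ((b - a) / 2) powr \<theta> + 2 * (b - a) powr \<theta>)"
    using left right halves \<delta> by (simp add: algebra_simps)
  also have "\<dots> = ?c * (b - a) powr \<theta>"
    using sewing_const_recursion[OF \<theta>, of "b - a"] ord by simp
  finally show ?thesis .
qed

lemma sewing_local_bound: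
  fixes \<Xi> :: "real \<Rightarrow> real \<Rightarrow> 'a::real_normed_vector"
  assumes \<theta>: "1 < \<theta>" and K: "0 \<le> K" and \<Xi>: "delta_bounded S \<theta> K \<Xi>"
  shows "sorted_wrt (<) P \<Longrightarrow> P \<noteq> [] \<Longrightarrow> set P \<subseteq> S \<Longrightarrow>
    norm (germ_sum \<Xi> P - \<Xi> (hd P) (last P)) \<le> sewing_const \<theta> * K * (last P - hd P) powr \<theta>"
proof (induction "length P" arbitrary: P rule: less_induct)
  case less
  show ?case
  proof (cases "length P \<le> 2")
    case True
    with less.prems consider a where "P = [a]" | a b where "P = [a, b]"
      by (cases P; cases "tl P") auto
    then show ?thesis using \<Xi> less.prems(3) sewing_const_pos[OF \<theta>] K unfolding delta_bounded_def by cases auto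
  next
    case False
    define a b where "a = hd P" and "b = last P"
    have "a < b" using sorted_wrt_less_hd_less_last less.prems(1) False unfolding a_def b_def by simp
    then obtain L R where P: "P = L @ R" "L \<noteq> []" "R \<noteq> []"
        and mid: "last L \<le> (a + b) / 2" "(a + b) / 2 < hd R"
      using sorted_wrt_less_split[OF less.prems(1,2), of "(a + b) / 2"] unfolding a_def b_def by auto
    have L: "sorted_wrt (<) L" "set L \<subseteq> S" "hd L = a" "length L < length P"
      and R: "sorted_wrt (<) R" "set R \<subseteq> S" "last R = b" "length R < length P"
      using less.prems P unfolding a_def b_def by (auto simp: sorted_wrt_append)
    have ord: "a \<le> last L" "last L < hd R" "hd R \<le> b"
      using sorted_wrt_less_bounds(1)[OF L(1), of "last L"] sorted_wrt_less_bounds(2)[OF R(1), of "hd R"]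
        L(3) R(3) less.prems(1) P by (auto simp: sorted_wrt_append)
    have pts: "a \<in> S" "last L \<in> S" "hd R \<in> S" "b \<in> S"
      using L R P by (metis hd_in_set last_in_set subsetD)+
    have "norm (germ_sum \<Xi> L + \<Xi> (last L) (hd R) + germ_sum \<Xi> R - \<Xi> a b) \<le> sewing_const \<theta> * K * (b - a) powr \<theta>"
      using less.hyps[OF L(4) L(1) P(2) L(2)] less.hyps[OF R(4) R(1) P(3) R(2)] L(3) R(3) mid
      by (intro sewing_bisection_step[OF \<theta> K \<Xi> pts ord]) simp_all
    then show ?thesis using germ_sum_append[OF P(2,3), of \<Xi>] unfolding a_def b_def P(1) by simp
  qed
qed

lemma sewing_refinement_bound:
  fixes \<Xi> :: "real \<Rightarrow> real \<Rightarrow> 'a::real_normed_vector"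
  assumes \<theta>: "1 < \<theta>" and K: "0 \<le> K" and \<Xi>: "delta_bounded S \<theta> K \<Xi>"
  shows "sorted_wrt (<) P \<Longrightarrow> P \<noteq> [] \<Longrightarrow> sorted_wrt (<) R \<Longrightarrow> set R \<subseteq> S \<Longrightarrow> set P \<subseteq> set R \<Longrightarrow>
    hd R = hd P \<Longrightarrow> last R = last P \<Longrightarrow>
    norm (germ_sum \<Xi> R - germ_sum \<Xi> P) \<le> sewing_const \<theta> * K * germ_sum (\<lambda>a b. (b - a) powr \<theta>) P"
proof (induction P arbitrary: R rule: induct_list012)
  case (2 a)
  then have "R = [a]" using sorted_wrt_less_hd_eq_last[of R] by (cases R) auto
  then show ?case by simp
next
  case (3 a p P)
  have "p \<in> set R" using "3.prems"(5) by auto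
  then obtain L R' where R: "R = L @ p # R'" by (meson split_list)
  have "L \<noteq> []" using R "3.prems"(1,6) by auto
  have sorted: "sorted_wrt (<) (L @ [p])" "sorted_wrt (<) (p # R')" and below_p: "\<forall>x\<in>set L. x < p"
    using "3.prems"(3) unfolding R by (auto simp: sorted_wrt_append)
  have "set (p # P) \<subseteq> set (p # R')"
  proof
    fix q assume "q \<in> set (p # P)"
    then have "q = p \<or> (p < q \<and> q \<in> set R)" using "3.prems"(1,5) by auto
    then show "q \<in> set (p # R')" using below_p unfolding R by auto
  qed
  then have IH: "norm (germ_sum \<Xi> (p # R') - germ_sum \<Xi> (p # P))
      \<le> sewing_const \<theta> * K * germ_sum (\<lambda>a b. (b - a) powr \<theta>) (p # P)"
    using "3.IH"(2)[OF _ _ sorted(2)] "3.prems" R by auto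
  have local: "norm (germ_sum \<Xi> (L @ [p]) - \<Xi> a p) \<le> sewing_const \<theta> * K * (p - a) powr \<theta>"
    using sewing_local_bound[OF \<theta> K \<Xi> sorted(1)] "3.prems"(4,6) \<open>L \<noteq> []\<close> R by auto
  have split: "germ_sum \<Xi> R - germ_sum \<Xi> (a # p # P)
      = (germ_sum \<Xi> (L @ [p]) - \<Xi> a p) + (germ_sum \<Xi> (p # R') - germ_sum \<Xi> (p # P))"
    using germ_sum_append[OF \<open>L \<noteq> []\<close>, of "p # R'" \<Xi>] germ_sum_append[OF \<open>L \<noteq> []\<close>, of "[p]" \<Xi>]
    unfolding R by simp
  have "norm (germ_sum \<Xi> R - germ_sum \<Xi> (a # p # P))
      \<le> norm (germ_sum \<Xi> (L @ [p]) - \<Xi> a p) + norm (germ_sum \<Xi> (p # R') - germ_sum \<Xi> (p # P))"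
    unfolding split by (rule norm_triangle_ineq)
  then show ?case using IH local by (simp add: algebra_simps)
qed simp

lemma sewing_partitions_close:
  fixes \<Xi> :: "real \<Rightarrow> real \<Rightarrow> 'a::real_normed_vector"
  assumes \<theta>: "1 < \<theta>" and K: "0 \<le> K" and \<Xi>: "delta_bounded {a..b} \<theta> K \<Xi>"
    and P: "is_partition P a b" and Q: "is_partition Q a b"
  shows "norm (germ_sum \<Xi> P - germ_sum \<Xi> Q)
    \<le> sewing_const \<theta> * K * (b - a) * (mesh P powr (\<theta> - 1) + mesh Q powr (\<theta> - 1))"
proof -
  define R where "R = sorted_list_of_set (set P \<union> set Q)"
  have R: "sorted_wrt (<) R" "set R = set P \<union> set Q" unfolding R_def by simp_all
  then have "set R \<subseteq> {a..b}" using is_partition_subset[OF P] is_partition_subset[OF Q] by auto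
  have "a \<in> set R" "b \<in> set R" using P R(2) unfolding is_partition_def by (metis Un_iff hd_in_set last_in_set)+
  moreover have "hd R \<in> {a..b}" "last R \<in> {a..b}"
    using \<open>set R \<subseteq> {a..b}\<close> \<open>a \<in> set R\<close> by (metis empty_iff hd_in_set last_in_set list.set(1) subsetD)+
  ultimately have "hd R = a" "last R = b" using sorted_wrt_less_bounds[OF R(1)] by force+
  have refine: "norm (germ_sum \<Xi> R - germ_sum \<Xi> X) \<le> sewing_const \<theta> * K * (b - a) * mesh X powr (\<theta> - 1)"
    if X: "is_partition X a b" "set X \<subseteq> set R" for X
  proof -
    have X': "sorted_wrt (<) X" "X \<noteq> []" "hd X = a" "last X = b" using X(1) unfolding is_partition_def by auto
    have "norm (germ_sum \<Xi> R - germ_sum \<Xi> X) \<le> sewing_const \<theta> * K * germ_sum (\<lambda>a b. (b - a) powr \<theta>) X"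
      using sewing_refinement_bound[OF \<theta> K \<Xi> X'(1,2) R(1) \<open>set R \<subseteq> {a..b}\<close> X(2)] \<open>hd R = a\<close> \<open>last R = b\<close> X'
      by simp
    also have "\<dots> \<le> sewing_const \<theta> * K * (mesh X powr (\<theta> - 1) * (b - a))"
      using germ_sum_powr_le_mesh[OF \<theta> X'(1,2)] X' sewing_const_pos[OF \<theta>] K by (intro mult_left_mono) auto
    finally show ?thesis by (simp add: algebra_simps)
  qed
  have "norm (germ_sum \<Xi> P - germ_sum \<Xi> Q) \<le> norm (germ_sum \<Xi> R - germ_sum \<Xi> P) + norm (germ_sum \<Xi> R - germ_sum \<Xi> Q)"
    using norm_triangle_ineq4[of "germ_sum \<Xi> R - germ_sum \<Xi> Q" "germ_sum \<Xi> R - germ_sum \<Xi> P"] by simp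
  also have "\<dots> \<le> sewing_const \<theta> * K * (b - a) * (mesh P powr (\<theta> - 1) + mesh Q powr (\<theta> - 1))"
    using refine[OF P] refine[OF Q] R(2) by (simp add: distrib_left)
  finally show ?thesis .
qed

definition has_sewing_limit :: "(real \<Rightarrow> real \<Rightarrow> 'a::real_normed_vector) \<Rightarrow> real \<Rightarrow> real \<Rightarrow> 'a \<Rightarrow> bool" where
  "has_sewing_limit \<Xi> a b I \<longleftrightarrow>
     (\<forall>\<epsilon>>0. \<exists>\<delta>>0. \<forall>P. is_partition P a b \<and> mesh P < \<delta> \<longrightarrow> norm (germ_sum \<Xi> P - I) < \<epsilon>)"

lemma has_young_integral_iff_has_sewing_limit:
  "has_young_integral A x s t I \<longleftrightarrow> has_sewing_limit (\<lambda>a b. A b (x a) - A a (x a)) s t I"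
  unfolding has_young_integral_def has_sewing_limit_def young_sum_eq_germ_sum ..

lemma has_sewing_limitI:
  assumes "0 < \<gamma>" "0 \<le> c" and bound: "\<And>P. is_partition P a b \<Longrightarrow> norm (germ_sum \<Xi> P - I) \<le> c * mesh P powr \<gamma>"
  shows "has_sewing_limit \<Xi> a b I"
  unfolding has_sewing_limit_def
proof (intro allI impI)
  fix \<epsilon> :: real assume "0 < \<epsilon>"
  define \<delta> where "\<delta> = (\<epsilon> / (c + 1)) powr (1 / \<gamma>)"
  have "0 < \<delta>" "\<delta> powr \<gamma> = \<epsilon> / (c + 1)"
    using \<open>0 < \<epsilon>\<close> assms(1,2) unfolding \<delta>_def by (simp_all add: powr_powr)
  have "norm (germ_sum \<Xi> P - I) < \<epsilon>" if "is_partition P a b" "mesh P < \<delta>" for P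
  proof -
    have "c * mesh P powr \<gamma> \<le> c * (\<epsilon> / (c + 1))"
      using that(2) assms(1,2) mesh_nonneg[of P] \<open>\<delta> powr \<gamma> = _\<close>
      by (metis less_imp_le mult_left_mono powr_mono2)
    also have "\<dots> < \<epsilon>" using \<open>0 < \<epsilon>\<close> assms(2) by (simp add: field_simps)
    finally show ?thesis using bound[OF that(1)] by linarith
  qed
  then show "\<exists>\<delta>>0. \<forall>P. is_partition P a b \<and> mesh P < \<delta> \<longrightarrow> norm (germ_sum \<Xi> P - I) < \<epsilon>"
    using \<open>0 < \<delta>\<close> by blast
qed

lemma has_sewing_limit_uniform_partition:
  assumes "has_sewing_limit \<Xi> a b I" "a < b"
  shows "(\<lambda>n. germ_sum \<Xi> (uniform_partition a b n)) \<longlonglongrightarrow> I"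
  unfolding tendsto_iff
proof (intro allI impI)
  fix \<epsilon> :: real assume "0 < \<epsilon>"
  then obtain \<delta> where "0 < \<delta>" and \<delta>: "\<And>P. is_partition P a b \<Longrightarrow> mesh P < \<delta> \<Longrightarrow> norm (germ_sum \<Xi> P - I) < \<epsilon>"
    using assms(1) unfolding has_sewing_limit_def by blast
  have "eventually (\<lambda>n. mesh (uniform_partition a b n) < \<delta>) sequentially"
    using order_tendstoD(2)[OF mesh_uniform_partition_tendsto[OF assms(2)] \<open>0 < \<delta>\<close>] .
  then show "eventually (\<lambda>n. dist (germ_sum \<Xi> (uniform_partition a b n)) I < \<epsilon>) sequentially"
    by eventually_elim (simp add: dist_norm \<delta> is_partition_uniform_partition[OF assms(2)])
qed

lemma has_sewing_limit_unique:
  "has_sewing_limit \<Xi> a b I \<Longrightarrow> has_sewing_limit \<Xi> a b J \<Longrightarrow> a < b \<Longrightarrow> I = J"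
  using LIMSEQ_unique has_sewing_limit_uniform_partition by blast

lemma has_sewing_limit_bounded_linear:
  assumes "bounded_linear f" "has_sewing_limit \<Xi> a b I"
  shows "has_sewing_limit (\<lambda>u v. f (\<Xi> u v)) a b (f I)"
  unfolding has_sewing_limit_def
proof (intro allI impI)
  fix \<epsilon> :: real assume "0 < \<epsilon>"
  obtain B where "0 < B" and B: "\<And>x. norm (f x) \<le> norm x * B"
    using bounded_linear.pos_bounded[OF assms(1)] by blast
  obtain \<delta> where "0 < \<delta>" and \<delta>: "\<And>P. is_partition P a b \<Longrightarrow> mesh P < \<delta> \<Longrightarrow> norm (germ_sum \<Xi> P - I) < \<epsilon> / B"
    using assms(2) \<open>0 < \<epsilon>\<close> \<open>0 < B\<close> unfolding has_sewing_limit_def by (meson divide_pos_pos)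
  have "norm (germ_sum (\<lambda>u v. f (\<Xi> u v)) P - f I) < \<epsilon>" if "is_partition P a b" "mesh P < \<delta>" for P
  proof -
    have "germ_sum (\<lambda>u v. f (\<Xi> u v)) P - f I = f (germ_sum \<Xi> P - I)"
      using germ_sum_linear[of f \<Xi> P] bounded_linear.linear[OF assms(1)] by (simp add: linear_diff)
    then show ?thesis using B[of "germ_sum \<Xi> P - I"] \<delta>[OF that] \<open>0 < B\<close> by (simp add: field_simps)
  qed
  then show "\<exists>\<delta>>0. \<forall>P. is_partition P a b \<and> mesh P < \<delta> \<longrightarrow> norm (germ_sum (\<lambda>u v. f (\<Xi> u v)) P - f I) < \<epsilon>"
    using \<open>0 < \<delta>\<close> by blast
qed

lemma has_sewing_limit_of_increments:
  assumes "1 < \<theta>" "0 \<le> M" "a \<le> b"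
    and local: "\<And>u v. a \<le> u \<Longrightarrow> u < v \<Longrightarrow> v \<le> b \<Longrightarrow> norm (\<Xi> u v - (f v - f u)) \<le> M * (v - u) powr \<theta>"
  shows "has_sewing_limit \<Xi> a b (f b - f a)"
proof (rule has_sewing_limitI)
  fix P assume P: "is_partition P a b"
  then have P': "sorted_wrt (<) P" "P \<noteq> []" "hd P = a" "last P = b" "set P \<subseteq> {a..b}"
    using is_partition_subset unfolding is_partition_def by auto
  have "germ_sum \<Xi> P - (f b - f a) = germ_sum (\<lambda>u v. \<Xi> u v - (f v - f u)) P"
    using germ_sum_telescope[OF P'(2), of f] P' by (simp add: germ_sum_diff)
  then have "norm (germ_sum \<Xi> P - (f b - f a)) \<le> germ_sum (\<lambda>u v. norm (\<Xi> u v - (f v - f u))) P"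
    by (metis norm_germ_sum_le)
  also have "\<dots> \<le> germ_sum (\<lambda>u v. M * (v - u) powr \<theta>) P"
    using P' zip_tl_less zip_tl_in_set by (intro germ_sum_mono local) fastforce+
  also have "\<dots> \<le> M * (mesh P powr (\<theta> - 1) * (b - a))"
    using germ_sum_powr_le_mesh[OF assms(1) P'(1,2)] P' assms(2) by (simp add: germ_sum_scale mult_left_mono)
  finally show "norm (germ_sum \<Xi> P - (f b - f a)) \<le> M * (b - a) * mesh P powr (\<theta> - 1)"
    by (simp add: ac_simps)
qed (use assms in auto)

lemma has_sewing_limit_of_Cauchy:
  fixes \<Xi> :: "real \<Rightarrow> real \<Rightarrow> 'a::banach"
  assumes "0 < \<gamma>" "0 \<le> c" "a < b"
    and close: "\<And>P Q. is_partition P a b \<Longrightarrow> is_partition Q a b \<Longrightarrow>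
      dist (germ_sum \<Xi> P) (germ_sum \<Xi> Q) \<le> c * mesh P powr \<gamma> + c * mesh Q powr \<gamma>"
  obtains I where "has_sewing_limit \<Xi> a b I"
proof -
  let ?U = "uniform_partition a b" and ?E = "\<lambda>P. c * mesh P powr \<gamma>"
  note U = is_partition_uniform_partition[OF \<open>a < b\<close>]
  have E_U: "(\<lambda>n. ?E (?U n)) \<longlonglongrightarrow> 0"
    using assms(1) mesh_nonneg
    by (intro tendsto_mult_right_zero tendsto_zero_powrI[OF mesh_uniform_partition_tendsto[OF \<open>a < b\<close>]])
      auto
  have "Cauchy (\<lambda>n. germ_sum \<Xi> (?U n))"
  proof (rule metric_CauchyI)
    fix \<epsilon> :: real assume "0 < \<epsilon>"
    then obtain N where N: "\<And>n. N \<le> n \<Longrightarrow> ?E (?U n) < \<epsilon> / 2"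
      using order_tendstoD(2)[OF E_U, of "\<epsilon> / 2"] by (auto simp: eventually_sequentially)
    have "dist (germ_sum \<Xi> (?U m)) (germ_sum \<Xi> (?U n)) < \<epsilon>" if "N \<le> m" "N \<le> n" for m n
      using close[OF U U, of m n] N[OF that(1)] N[OF that(2)] by linarith
    then show "\<exists>N. \<forall>m\<ge>N. \<forall>n\<ge>N. dist (germ_sum \<Xi> (?U m)) (germ_sum \<Xi> (?U n)) < \<epsilon>" by blast
  qed
  then obtain I where I: "(\<lambda>n. germ_sum \<Xi> (?U n)) \<longlonglongrightarrow> I"
    using Cauchy_convergent_iff convergent_def by blast
  have "norm (germ_sum \<Xi> P - I) \<le> ?E P" if P: "is_partition P a b" for P
  proof (rule tendsto_le[OF trivial_limit_sequentially])
    show "(\<lambda>n. ?E P + ?E (?U n)) \<longlonglongrightarrow> ?E P"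
      using tendsto_add[OF tendsto_const E_U] by simp
    show "(\<lambda>n. norm (germ_sum \<Xi> P - germ_sum \<Xi> (?U n))) \<longlonglongrightarrow> norm (germ_sum \<Xi> P - I)"
      by (intro tendsto_intros I)
    show "\<forall>\<^sub>F n in sequentially. norm (germ_sum \<Xi> P - germ_sum \<Xi> (?U n)) \<le> ?E P + ?E (?U n)"
      using close[OF P U] by (simp add: dist_norm)
  qed
  then show thesis using assms(1,2) by (intro that has_sewing_limitI)
qed

lemma sewing_lemma:
  fixes \<Xi> :: "real \<Rightarrow> real \<Rightarrow> 'a::banach"
  assumes \<theta>: "1 < \<theta>" and K: "0 \<le> K" and \<Xi>: "delta_bounded {a..b} \<theta> K \<Xi>" and "a < b"
  obtains I where "has_sewing_limit \<Xi> a b I"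
proof (rule has_sewing_limit_of_Cauchy)
  show "0 < \<theta> - 1" "0 \<le> sewing_const \<theta> * K * (b - a)"
    using \<theta> K \<open>a < b\<close> sewing_const_pos[OF \<theta>] by simp_all
  show "dist (germ_sum \<Xi> P) (germ_sum \<Xi> Q)
      \<le> sewing_const \<theta> * K * (b - a) * mesh P powr (\<theta> - 1) + sewing_const \<theta> * K * (b - a) * mesh Q powr (\<theta> - 1)"
    if "is_partition P a b" "is_partition Q a b" for P Q
    using sewing_partitions_close[OF \<theta> K \<Xi> that] by (simp add: dist_norm algebra_simps)
qed (use \<open>a < b\<close> that in auto)

section \<open>Holder bounds on the field\<close>

text \<open>The Holder quotient in \<^const>\<open>holder_field\<close> is a supremum over pairs \<open>x \<noteq> y\<close>, which is the
  junk value \<open>Sup {}\<close> when \<open>V\<close> is a single point. Hence the hypothesis \<open>x\<^sub>0 \<noteq> y\<^sub>0\<close> here, and the case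
  distinction below, where injectivity of \<open>\<iota>\<close> forces \<open>W = {0}\<close> instead.\<close>

lemma holder_field_sup_bounds:
  fixes A :: "real \<Rightarrow> 'v::real_normed_vector \<Rightarrow> 'w::real_normed_vector"
  assumes "holder_field T \<alpha> \<beta> A" "x0 \<noteq> (y0 :: 'v)"
  obtains C where
    "\<And>s t x. 0 \<le> s \<Longrightarrow> s < t \<Longrightarrow> t \<le> T \<Longrightarrow> norm (A t x - A s x) \<le> C * (t - s) powr \<alpha>"
    "\<And>s t x y. 0 \<le> s \<Longrightarrow> s < t \<Longrightarrow> t \<le> T \<Longrightarrow> x \<noteq> y \<Longrightarrow>
      norm ((A t x - A s x) - (A t y - A s y)) / norm (x - y) powr \<beta> \<le> C * (t - s) powr \<alpha>"
proof -
  define hol where "hol s t x y = norm ((A t x - A s x) - (A t y - A s y)) / norm (x - y) powr \<beta>" for s t x y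
  have hol_prod: "(\<lambda>(x, y). hol s t x y) = (\<lambda>p. hol s t (fst p) (snd p))" for s t by auto
  obtain C where C: "\<And>s t. 0 \<le> s \<Longrightarrow> s < t \<Longrightarrow> t \<le> T \<Longrightarrow>
      (SUP x. norm (A t x - A s x)) + (SUP p\<in>{(x, y). x \<noteq> y}. hol s t (fst p) (snd p)) \<le> C * (t - s) powr \<alpha>
      \<and> bdd_above (range (\<lambda>x. norm (A t x - A s x)))
      \<and> bdd_above ((\<lambda>p. hol s t (fst p) (snd p)) ` {(x, y). x \<noteq> y})"
    using assms(1) unfolding holder_field_def hol_def[symmetric] hol_prod by fastforce
  have key: "norm (A t x - A s x) \<le> C * (t - s) powr \<alpha> \<and> (x' \<noteq> y' \<longrightarrow> hol s t x' y' \<le> C * (t - s) powr \<alpha>)"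
    if "0 \<le> s" "s < t" "t \<le> T" for s t x x' y'
  proof -
    note C' = C[OF that]
    have sup1: "norm (A t z - A s z) \<le> (SUP x. norm (A t x - A s x))" for z
      using C' by (intro cSUP_upper) auto
    have sup2: "hol s t x y \<le> (SUP p\<in>{(x, y). x \<noteq> y}. hol s t (fst p) (snd p))" if "x \<noteq> y" for x y
      using C' that cSUP_upper[of "(x, y)" "{(x, y). x \<noteq> y}" "\<lambda>p. hol s t (fst p) (snd p)"] by simp
    have "0 \<le> hol s t x0 y0" by (simp add: hol_def)
    then show ?thesis using C' sup1[of x] sup1[of x0] sup2 sup2[OF assms(2)] norm_ge_zero
      by (smt (verit))
  qed
  show thesis
  proof (rule that)
    show "norm (A t x - A s x) \<le> C * (t - s) powr \<alpha>" if "0 \<le> s" "s < t" "t \<le> T" for s t x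
      using key[OF that] by blast
    show "norm ((A t x - A s x) - (A t y - A s y)) / norm (x - y) powr \<beta> \<le> C * (t - s) powr \<alpha>"
      if "0 \<le> s" "s < t" "t \<le> T" "x \<noteq> y" for s t x y
      using key[OF that(1-3)] that(4) unfolding hol_def by blast
  qed
qed

lemma holder_field_bounds:
  fixes A :: "real \<Rightarrow> 'v::real_normed_vector \<Rightarrow> 'w::real_normed_vector" and \<iota> :: "'w \<Rightarrow> 'v"
  assumes "holder_field T \<alpha> \<beta> A" "inj \<iota>" "0 < T"
  obtains C where "0 \<le> C"
    "\<And>u v x. 0 \<le> u \<Longrightarrow> u \<le> v \<Longrightarrow> v \<le> T \<Longrightarrow> norm (A v x - A u x) \<le> C * (v - u) powr \<alpha>"
    "\<And>u v x y. 0 \<le> u \<Longrightarrow> u \<le> v \<Longrightarrow> v \<le> T \<Longrightarrow>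
      norm ((A v x - A u x) - (A v y - A u y)) \<le> C * (v - u) powr \<alpha> * norm (x - y) powr \<beta>"
proof (cases "\<exists>x0 y0::'v. x0 \<noteq> y0")
  case False
  then have "norm w = 0" for w :: 'w using \<open>inj \<iota>\<close> by (metis injD norm_zero)
  then show thesis by (intro that[of 0]) simp_all
next
  case True
  then obtain x0 y0 :: 'v where "x0 \<noteq> y0" by blast
  obtain C where C1: "\<And>s t x. 0 \<le> s \<Longrightarrow> s < t \<Longrightarrow> t \<le> T \<Longrightarrow> norm (A t x - A s x) \<le> C * (t - s) powr \<alpha>"
    and C2: "\<And>s t x y. 0 \<le> s \<Longrightarrow> s < t \<Longrightarrow> t \<le> T \<Longrightarrow> x \<noteq> y \<Longrightarrow>
      norm ((A t x - A s x) - (A t y - A s y)) / norm (x - y) powr \<beta> \<le> C * (t - s) powr \<alpha>"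
    using holder_field_sup_bounds[OF assms(1) \<open>x0 \<noteq> y0\<close>] by blast
  have "0 \<le> C * T powr \<alpha>"
    using C1[of 0 T x0] \<open>0 < T\<close> norm_ge_zero[of "A T x0 - A 0 x0"] by (simp del: norm_ge_zero)
  then have "0 \<le> C" using \<open>0 < T\<close> by (simp add: zero_le_mult_iff)
  then show thesis
  proof (rule that)
    fix u v x assume "0 \<le> u" "u \<le> v" "v \<le> T"
    then show "norm (A v x - A u x) \<le> C * (v - u) powr \<alpha>" using C1 by (cases "u = v") auto
  next
    fix u v x y assume "0 \<le> u" "u \<le> v" "v \<le> T"
    then show "norm ((A v x - A u x) - (A v y - A u y)) \<le> C * (v - u) powr \<alpha> * norm (x - y) powr \<beta>"
      using C2[of u v x y] \<open>0 \<le> C\<close> by (cases "u = v \<or> x = y") (auto simp: divide_le_eq)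
  qed
qed

lemma holder_continuous_on:
  fixes f :: "'a::real_normed_vector \<Rightarrow> 'b::real_normed_vector"
  assumes "\<And>x y. norm (f x - f y) \<le> K * norm (x - y) powr \<beta>" "0 < \<beta>"
  shows "continuous_on S f"
proof (intro continuous_at_imp_continuous_on ballI)
  fix x :: 'a
  have "((\<lambda>y. norm (y - x)) \<longlongrightarrow> 0) (at x)"
    using LIM_zero[OF tendsto_ident_at] tendsto_norm_zero by blast
  then have "((\<lambda>y. K * norm (y - x) powr \<beta>) \<longlongrightarrow> 0) (at x)"
    using assms(2) by (intro tendsto_mult_right_zero tendsto_zero_powrI) auto
  then have "((\<lambda>y. f y - f x) \<longlongrightarrow> 0) (at x)"
    by (rule Lim_null_comparison[rotated]) (use assms(1) in auto)
  then show "isCont f x" unfolding isCont_def by (rule LIM_zero_cancel)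
qed

section \<open>Euler approximations\<close>

definition absorb_bound :: "real \<Rightarrow> real \<Rightarrow> real \<Rightarrow> real \<Rightarrow> real" where
  "absorb_bound a c L \<beta> = max (a * (2 * c) powr \<beta>) ((a * (2 * L) powr \<beta>) powr (1 / (1 - \<beta>)))"

lemma le_absorb_bound:
  assumes N: "N \<le> a * (c + N * L) powr \<beta>" "0 \<le> N"
    and "0 \<le> c" "0 < L" "0 \<le> a" "0 < \<beta>" "\<beta> < 1"
  shows "N \<le> absorb_bound a c L \<beta>"
proof (cases "N * L \<le> c")
  case True
  then have "a * (c + N * L) powr \<beta> \<le> a * (2 * c) powr \<beta>"
    using assms by (intro mult_left_mono powr_mono2) auto
  then show ?thesis using N unfolding absorb_bound_def by linarith
next
  case False
  then have "0 < N" using assms by (smt (verit) mult_nonpos_nonneg)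
  have "c + N * L \<le> 2 * L * N" using False by (simp add: mult.commute)
  then have "a * (c + N * L) powr \<beta> \<le> a * (2 * L * N) powr \<beta>"
    using assms by (intro mult_left_mono powr_mono2) auto
  then have "N \<le> a * (2 * L) powr \<beta> * N powr \<beta>"
    using N \<open>0 < N\<close> assms by (simp add: powr_mult mult.assoc)
  then have "N powr (1 - \<beta>) \<le> a * (2 * L) powr \<beta>"
    using \<open>0 < N\<close> by (simp add: powr_diff divide_le_eq)
  then have "(N powr (1 - \<beta>)) powr (1 / (1 - \<beta>)) \<le> (a * (2 * L) powr \<beta>) powr (1 / (1 - \<beta>))"
    using assms by (intro powr_mono2) auto
  then show ?thesis using \<open>0 < N\<close> \<open>\<beta> < 1\<close> unfolding absorb_bound_def by (simp add: powr_powr)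
qed

lemma absorb_bound_nonneg: "0 \<le> a \<Longrightarrow> 0 \<le> c \<Longrightarrow> 0 \<le> absorb_bound a c L \<beta>"
  unfolding absorb_bound_def by (simp add: max.coboundedI1)

definition local_expansion ::
  "('w::real_normed_vector \<Rightarrow> 'v::real_normed_vector) \<Rightarrow> (real \<Rightarrow> 'v \<Rightarrow> 'w) \<Rightarrow> real \<Rightarrow> real set \<Rightarrow> real \<Rightarrow> (real \<Rightarrow> 'v) \<Rightarrow> bool"
  where "local_expansion \<iota> A \<theta> S M x \<longleftrightarrow>
    (\<forall>u\<in>S. \<forall>v\<in>S. u < v \<longrightarrow> norm (x v - x u - \<iota> (A v (x u) - A u (x u))) \<le> M * (v - u) powr \<theta>)"

lemma local_expansion_subset: "local_expansion \<iota> A \<theta> S M x \<Longrightarrow> S' \<subseteq> S \<Longrightarrow> local_expansion \<iota> A \<theta> S' M x"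
  unfolding local_expansion_def by blast

lemma germ_sum_map_upt:
  assumes "\<And>j. i \<le> j \<Longrightarrow> j < k \<Longrightarrow> y (Suc j) = y j + \<Xi> (g j) (g (Suc j))" "i \<le> k"
  shows "germ_sum \<Xi> (map g [i..<Suc k]) = y k - (y i :: 'a::ab_group_add)"
  using assms
proof (induction k)
  case (Suc k)
  show ?case
  proof (cases "i = Suc k")
    case False
    then have "map g [i..<Suc (Suc k)] = map g [i..<Suc k] @ [g (Suc k)]" "i \<le> k" using Suc.prems by auto
    then show ?thesis using germ_sum_append[of "map g [i..<Suc k]" "[g (Suc k)]" \<Xi>] Suc by simp
  qed simp
qed simp

lemma finite_strict_mono_enumeration:
  fixes S :: "'a::linorder set"
  assumes "finite S" "s \<in> S" "\<And>t. t \<in> S \<Longrightarrow> s \<le> t"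
  obtains n :: nat and g where "strict_mono_on {..n} g" "g ` {..n} = S" "g 0 = s"
proof -
  define L where "L = sorted_list_of_set S"
  have "Min S = s" using assms by (intro Min_eqI) auto
  then have "L = s # tl L"
    unfolding L_def using sorted_list_of_set_nonempty[of S] assms(1,2) by (metis empty_iff list.sel(3))
  moreover have "sorted_wrt (<) L" unfolding L_def by (rule strict_sorted_list_of_set)
  moreover have "set L = S" unfolding L_def using assms(1) by simp
  ultimately have L: "L = s # tl L" "sorted_wrt (<) L" "set L = S" by blast+
  define n where "n = length L - 1"
  have "{..n} = {..<length L}" unfolding n_def using L(1) by (metis Suc_diff_1 length_greater_0_conv
        lessThan_Suc_atMost list.discI)
  show thesis
  proof (rule that)
    show "strict_mono_on {..n} (nth L)"
      using L(2) \<open>{..n} = _\<close> by (intro strict_mono_onI) (simp add: sorted_wrt_nth_less)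
    show "nth L ` {..n} = S" using L(3) \<open>{..n} = _\<close> by (auto simp: set_conv_nth)
    show "L ! 0 = s" using L(1) by (metis nth_Cons_0)
  qed
qed

text \<open>The \<open>W\<close>-valued increments \<open>y\<^sub>k\<close> of the Euler scheme \<open>x\<^sub>k = x\<^sub>0 + \<iota> y\<^sub>k\<close> on the grid \<open>g\<close>.\<close>

primrec euler_scheme ::
  "(real \<Rightarrow> 'v \<Rightarrow> 'w::real_normed_vector) \<Rightarrow> ('w \<Rightarrow> 'v::real_normed_vector) \<Rightarrow> 'v \<Rightarrow> (nat \<Rightarrow> real) \<Rightarrow> nat \<Rightarrow> 'w"
  where
    "euler_scheme A \<iota> x0 g 0 = 0"
  | "euler_scheme A \<iota> x0 g (Suc k) = euler_scheme A \<iota> x0 g k +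
      (A (g (Suc k)) (x0 + \<iota> (euler_scheme A \<iota> x0 g k)) - A (g k) (x0 + \<iota> (euler_scheme A \<iota> x0 g k)))"

locale young_field =
  fixes \<iota> :: "'w::real_normed_vector \<Rightarrow> 'v::real_normed_vector"
    and A :: "real \<Rightarrow> 'v \<Rightarrow> 'w"
    and T \<alpha> \<beta> B C :: real
  assumes bounded_linear_\<iota>: "bounded_linear \<iota>"
    and norm_\<iota>_le: "\<And>w. norm (\<iota> w) \<le> B * norm w"
    and B_pos: "0 < B" and C_nonneg: "0 \<le> C" and T_pos: "0 < T"
    and \<alpha>_pos: "0 < \<alpha>" and \<beta>_pos: "0 < \<beta>" and \<beta>_less_1: "\<beta> < 1"
    and young_exponent: "1 < \<alpha> + \<alpha> * \<beta>"
    and increment_bound: "\<And>u v x. 0 \<le> u \<Longrightarrow> u \<le> v \<Longrightarrow> v \<le> T \<Longrightarrow> norm (A v x - A u x) \<le> C * (v - u) powr \<alpha>"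
    and increment_holder: "\<And>u v x y. 0 \<le> u \<Longrightarrow> u \<le> v \<Longrightarrow> v \<le> T \<Longrightarrow>
      norm ((A v x - A u x) - (A v y - A u y)) \<le> C * (v - u) powr \<alpha> * norm (x - y) powr \<beta>"
begin

abbreviation \<theta> :: real where "\<theta> \<equiv> \<alpha> + \<alpha> * \<beta>"

lemma linear_\<iota>: "linear \<iota>"
  using bounded_linear_\<iota> by (rule bounded_linear.linear)

lemma powr_\<theta>_le: "0 \<le> r \<Longrightarrow> r \<le> T \<Longrightarrow> r powr \<theta> \<le> T powr (\<alpha> * \<beta>) * r powr \<alpha>"
  using \<alpha>_pos \<beta>_pos by (cases "r = 0") (auto simp: powr_add intro!: mult_right_mono powr_mono2)

lemma holder_of_local_expansion:
  assumes "S \<subseteq> {0..T}" "0 \<le> M" "local_expansion \<iota> A \<theta> S M x" "u \<in> S" "v \<in> S" "u \<le> v"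
  shows "norm (x v - x u) \<le> (B * C + M * T powr (\<alpha> * \<beta>)) * (v - u) powr \<alpha>"
proof (cases "u = v")
  case False
  have uv: "0 \<le> u" "u < v" "v \<le> T" using assms False by auto
  have "norm (x v - x u) \<le> norm (\<iota> (A v (x u) - A u (x u))) + norm (x v - x u - \<iota> (A v (x u) - A u (x u)))"
    by (rule norm_triangle_sub)
  also have "\<dots> \<le> B * (C * (v - u) powr \<alpha>) + M * (T powr (\<alpha> * \<beta>) * (v - u) powr \<alpha>)"
  proof (rule add_mono)
    show "norm (\<iota> (A v (x u) - A u (x u))) \<le> B * (C * (v - u) powr \<alpha>)"
      using norm_\<iota>_le increment_bound[OF uv(1) less_imp_le[OF uv(2)] uv(3)] B_pos
      by (meson mult_left_mono order_trans less_imp_le)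
    have "norm (x v - x u - \<iota> (A v (x u) - A u (x u))) \<le> M * (v - u) powr \<theta>"
      using assms(3-5) uv unfolding local_expansion_def by blast
    also have "\<dots> \<le> M * (T powr (\<alpha> * \<beta>) * (v - u) powr \<alpha>)"
      using uv by (intro mult_left_mono powr_\<theta>_le \<open>0 \<le> M\<close>) auto
    finally show "norm (x v - x u - \<iota> (A v (x u) - A u (x u))) \<le> M * (T powr (\<alpha> * \<beta>) * (v - u) powr \<alpha>)" .
  qed
  finally show ?thesis by (simp add: algebra_simps)
qed simp

lemma delta_bounded_of_holder:
  assumes "S \<subseteq> {0..T}" "0 \<le> H"
    and x: "\<And>u v. u \<in> S \<Longrightarrow> v \<in> S \<Longrightarrow> u < v \<Longrightarrow> norm (x v - x u) \<le> H * (v - u) powr \<alpha>"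
  shows "delta_bounded S \<theta> (C * H powr \<beta>) (\<lambda>u v. A v (x u) - A u (x u))"
  unfolding delta_bounded_def
proof (intro conjI ballI impI)
  fix u m v assume S: "u \<in> S" "m \<in> S" "v \<in> S" and "u < m" "m < v"
  have "norm ((A v (x u) - A m (x u)) - (A v (x m) - A m (x m))) \<le> C * (v - m) powr \<alpha> * norm (x u - x m) powr \<beta>"
    using increment_holder[of m v] assms(1) S \<open>m < v\<close> by (simp add: subset_eq)
  also have "\<dots> \<le> C * (v - u) powr \<alpha> * (H powr \<beta> * (v - u) powr (\<alpha> * \<beta>))"
  proof (rule mult_mono)
    have "norm (x u - x m) powr \<beta> \<le> (H * (m - u) powr \<alpha>) powr \<beta>"
      using x[OF S(1,2) \<open>u < m\<close>] \<beta>_pos by (intro powr_mono2) (auto simp: norm_minus_commute)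
    also have "\<dots> = H powr \<beta> * (m - u) powr (\<alpha> * \<beta>)"
      using \<open>0 \<le> H\<close> \<open>u < m\<close> by (simp add: powr_mult powr_powr)
    also have "\<dots> \<le> H powr \<beta> * (v - u) powr (\<alpha> * \<beta>)"
      using \<open>u < m\<close> \<open>m < v\<close> \<alpha>_pos \<beta>_pos by (intro mult_left_mono powr_mono2) auto
    finally show "norm (x u - x m) powr \<beta> \<le> H powr \<beta> * (v - u) powr (\<alpha> * \<beta>)" .
    show "C * (v - m) powr \<alpha> \<le> C * (v - u) powr \<alpha>"
      using C_nonneg \<open>u < m\<close> \<open>m < v\<close> \<alpha>_pos by (intro mult_left_mono powr_mono2) auto
  qed (use C_nonneg in auto)
  also have "\<dots> = C * H powr \<beta> * (v - u) powr \<theta>"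
    using \<open>u < m\<close> \<open>m < v\<close> by (simp add: powr_add algebra_simps)
  finally show "norm ((A v (x u) - A u (x u)) - (A m (x u) - A u (x u)) - (A v (x m) - A m (x m)))
      \<le> C * H powr \<beta> * (v - u) powr \<theta>"
    by (simp add: algebra_simps)
qed simp

definition euler_const :: real where
  "euler_const = absorb_bound (sewing_const \<theta> * C * B powr \<beta>) C (T powr (\<alpha> * \<beta>)) \<beta>"

lemma euler_const_nonneg: "0 \<le> euler_const"
  unfolding euler_const_def
  using sewing_const_pos[OF young_exponent] C_nonneg by (intro absorb_bound_nonneg) auto

lemma local_expansion_of_grid:
  fixes g :: "nat \<Rightarrow> real"
  assumes g: "strict_mono_on {..n} g" and x: "\<And>k. k \<le> n \<Longrightarrow> x (g k) = x0 + \<iota> (y k)"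
    and y: "\<And>i k. i < k \<Longrightarrow> k \<le> n \<Longrightarrow>
      norm (y k - y i - (A (g k) (x (g i)) - A (g i) (x (g i)))) \<le> N * (g k - g i) powr \<theta>"
  shows "local_expansion \<iota> A \<theta> (g ` {..n}) (B * N) x"
  unfolding local_expansion_def
proof (intro ballI impI)
  fix u v assume "u \<in> g ` {..n}" "v \<in> g ` {..n}" "u < v"
  then obtain i k where ik: "i \<le> n" "k \<le> n" "u = g i" "v = g k" by auto
  then have "i < k" using strict_mono_on_less[OF g] \<open>u < v\<close> by auto
  have "x v - x u - \<iota> (A v (x u) - A u (x u)) = \<iota> (y k - y i - (A (g k) (x (g i)) - A (g i) (x (g i))))"
    using x ik linear_\<iota> by (simp add: linear_diff)
  also have "norm \<dots> \<le> B * (N * (g k - g i) powr \<theta>)"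
    using norm_\<iota>_le y[OF \<open>i < k\<close> ik(2)] B_pos by (meson mult_left_mono order_trans less_imp_le)
  finally show "norm (x v - x u - \<iota> (A v (x u) - A u (x u))) \<le> B * N * (v - u) powr \<theta>"
    using ik by simp
qed

lemma euler_remainder_improve:
  fixes g :: "nat \<Rightarrow> real" and y :: "nat \<Rightarrow> 'w" and x :: "real \<Rightarrow> 'v"
  assumes g: "strict_mono_on {..n} g" "g ` {..n} \<subseteq> {0..T}"
    and x: "\<And>k. k \<le> n \<Longrightarrow> x (g k) = x0 + \<iota> (y k)"
    and y: "\<And>k. k < n \<Longrightarrow> y (Suc k) = y k + (A (g (Suc k)) (x (g k)) - A (g k) (x (g k)))"
    and "0 \<le> N" and N: "\<And>i k. i < k \<Longrightarrow> k \<le> n \<Longrightarrow>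
      norm (y k - y i - (A (g k) (x (g i)) - A (g i) (x (g i)))) \<le> N * (g k - g i) powr \<theta>"
    and ik: "i < k" "k \<le> n"
  shows "norm (y k - y i - (A (g k) (x (g i)) - A (g i) (x (g i))))
    \<le> sewing_const \<theta> * C * B powr \<beta> * (C + N * T powr (\<alpha> * \<beta>)) powr \<beta> * (g k - g i) powr \<theta>"
proof -
  define \<Xi> where "\<Xi> u v = A v (x u) - A u (x u)" for u v
  define H where "H = B * (C + N * T powr (\<alpha> * \<beta>))"
  have "0 \<le> H" unfolding H_def using B_pos C_nonneg \<open>0 \<le> N\<close> by simp
  have expansion: "local_expansion \<iota> A \<theta> (g ` {..n}) (B * N) x"
    using local_expansion_of_grid[OF g(1) x N] .
  have \<delta>: "delta_bounded (g ` {..n}) \<theta> (C * H powr \<beta>) \<Xi>"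
    unfolding \<Xi>_def
  proof (rule delta_bounded_of_holder[OF g(2) \<open>0 \<le> H\<close>])
    fix u v assume "u \<in> g ` {..n}" "v \<in> g ` {..n}" "u < v"
    then show "norm (x v - x u) \<le> H * (v - u) powr \<alpha>"
      using holder_of_local_expansion[OF g(2) _ expansion] B_pos \<open>0 \<le> N\<close>
      unfolding H_def by (simp add: algebra_simps)
  qed
  let ?P = "map g [i..<Suc k]"
  have sorted: "sorted_wrt (<) ?P"
    unfolding sorted_wrt_map using strict_mono_onD[OF g(1)] ik(2)
    by (intro sorted_wrt_mono_rel[OF _ sorted_wrt_upt]) auto
  have P: "?P \<noteq> []" "set ?P \<subseteq> g ` {..n}" "hd ?P = g i" "last ?P = g k"
    using ik by (auto simp: hd_map upt_conv_Cons)
  have "germ_sum \<Xi> ?P = y k - y i"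
    using ik y x by (intro germ_sum_map_upt) (auto simp: \<Xi>_def)
  moreover have "0 \<le> C * H powr \<beta>" using C_nonneg by simp
  ultimately have "norm (y k - y i - \<Xi> (g i) (g k)) \<le> sewing_const \<theta> * (C * H powr \<beta>) * (g k - g i) powr \<theta>"
    using sewing_local_bound[OF young_exponent _ \<delta> sorted P(1,2)] P(3,4) by simp
  moreover have "H powr \<beta> = B powr \<beta> * (C + N * T powr (\<alpha> * \<beta>)) powr \<beta>"
    unfolding H_def using B_pos C_nonneg \<open>0 \<le> N\<close> by (simp add: powr_mult)
  ultimately show ?thesis unfolding \<Xi>_def by (simp add: mult.assoc)
qed

text \<open>The best constant \<open>N\<close> of a grid satisfies \<open>N \<le> a (C + N T\<^sup>\<alpha>\<^sup>\<beta>)\<^sup>\<beta>\<close> by the previous lemma,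
  and \<open>\<beta> < 1\<close> turns this into a bound independent of the grid.\<close>

lemma euler_remainder_bound:
  fixes g :: "nat \<Rightarrow> real" and y :: "nat \<Rightarrow> 'w" and x :: "real \<Rightarrow> 'v"
  assumes g: "strict_mono_on {..n} g" "g ` {..n} \<subseteq> {0..T}"
    and x: "\<And>k. k \<le> n \<Longrightarrow> x (g k) = x0 + \<iota> (y k)"
    and y: "\<And>k. k < n \<Longrightarrow> y (Suc k) = y k + (A (g (Suc k)) (x (g k)) - A (g k) (x (g k)))"
    and ik: "i < k" "k \<le> n"
  shows "norm (y k - y i - (A (g k) (x (g i)) - A (g i) (x (g i)))) \<le> euler_const * (g k - g i) powr \<theta>"
proof -
  define D where "D = {(i, k). i < k \<and> k \<le> n}"
  define ratio where "ratio = (\<lambda>(i, k). norm (y k - y i - (A (g k) (x (g i)) - A (g i) (x (g i))))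
    / (g k - g i) powr \<theta>)"
  define N where "N = Max (ratio ` D)"
  have "finite D" unfolding D_def by (rule finite_subset[of _ "{..n} \<times> {..n}"]) auto
  have "(i, k) \<in> D" using ik unfolding D_def by simp
  have gap: "0 < g k - g i" if "i < k" "k \<le> n" for i k
    using strict_mono_onD[OF g(1), of i k] that by simp
  have ratio_iff: "ratio (i, k) \<le> c \<longleftrightarrow>
      norm (y k - y i - (A (g k) (x (g i)) - A (g i) (x (g i)))) \<le> c * (g k - g i) powr \<theta>"
    if "i < k" "k \<le> n" for i k c
    using gap[OF that] by (simp add: ratio_def pos_divide_le_eq)
  have N: "norm (y k - y i - (A (g k) (x (g i)) - A (g i) (x (g i)))) \<le> N * (g k - g i) powr \<theta>"
    if "i < k" "k \<le> n" for i k
    unfolding ratio_iff[OF that, symmetric] N_def using \<open>finite D\<close> that by (intro Max_ge) (auto simp: D_def)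
  have "0 \<le> ratio (i, k)" by (simp add: ratio_def)
  moreover have "ratio (i, k) \<le> N" unfolding N_def using \<open>finite D\<close> \<open>(i, k) \<in> D\<close> by simp
  ultimately have "0 \<le> N" by linarith
  have "ratio p \<le> sewing_const \<theta> * C * B powr \<beta> * (C + N * T powr (\<alpha> * \<beta>)) powr \<beta>" if "p \<in> D" for p
  proof -
    obtain i k where "p = (i, k)" "i < k" "k \<le> n" using \<open>p \<in> D\<close> unfolding D_def by auto
    then show ?thesis using ratio_iff euler_remainder_improve[OF g x y \<open>0 \<le> N\<close> N] by simp
  qed
  then have "Max (ratio ` D) \<le> sewing_const \<theta> * C * B powr \<beta> * (C + N * T powr (\<alpha> * \<beta>)) powr \<beta>"
    using \<open>finite D\<close> \<open>(i, k) \<in> D\<close> by (intro Max.boundedI) auto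
  then have "N \<le> sewing_const \<theta> * C * B powr \<beta> * (C + N * T powr (\<alpha> * \<beta>)) powr \<beta>"
    by (simp only: N_def[symmetric])
  then have "N \<le> euler_const"
    unfolding euler_const_def using \<open>0 \<le> N\<close> C_nonneg T_pos sewing_const_pos[OF young_exponent] \<beta>_pos \<beta>_less_1
    by (intro le_absorb_bound) auto
  then show ?thesis
    using N[OF ik] gap[OF ik] by (meson mult_right_mono order_trans powr_ge_zero)
qed

lemma euler_increment_bound:
  fixes g :: "nat \<Rightarrow> real" and y :: "nat \<Rightarrow> 'w" and x :: "real \<Rightarrow> 'v"
  assumes g: "strict_mono_on {..n} g" "g ` {..n} \<subseteq> {0..T}"
    and x: "\<And>k. k \<le> n \<Longrightarrow> x (g k) = x0 + \<iota> (y k)"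
    and y: "\<And>k. k < n \<Longrightarrow> y (Suc k) = y k + (A (g (Suc k)) (x (g k)) - A (g k) (x (g k)))"
    and "k \<le> n"
  shows "norm (y k - y 0) \<le> C * T powr \<alpha> + euler_const * T powr \<theta>"
proof (cases "k = 0")
  case False
  have "g 0 < g k" "0 \<le> g 0" "g k \<le> T" using strict_mono_onD[OF g(1), of 0 k] g(2) \<open>k \<le> n\<close> False by auto
  have "norm (y k - y 0) \<le> norm (A (g k) (x (g 0)) - A (g 0) (x (g 0)))
      + norm (y k - y 0 - (A (g k) (x (g 0)) - A (g 0) (x (g 0))))"
    by (rule norm_triangle_sub)
  also have "\<dots> \<le> C * (g k - g 0) powr \<alpha> + euler_const * (g k - g 0) powr \<theta>"
    using increment_bound[of "g 0" "g k"] euler_remainder_bound[OF g x y, of 0 k] \<open>g 0 < g k\<close> \<open>0 \<le> g 0\<close>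
      \<open>g k \<le> T\<close> \<open>k \<le> n\<close> False by (intro add_mono) auto
  also have "\<dots> \<le> C * T powr \<alpha> + euler_const * T powr \<theta>"
    using \<open>g 0 < g k\<close> \<open>0 \<le> g 0\<close> \<open>g k \<le> T\<close> C_nonneg euler_const_nonneg \<alpha>_pos \<beta>_pos
    by (intro add_mono mult_left_mono powr_mono2) auto
  finally show ?thesis .
qed (simp add: C_nonneg euler_const_nonneg)

lemma euler_approximation:
  assumes "0 \<le> s" "s \<le> T" "finite F" "F \<subseteq> {s..T}"
  obtains X where "X s = x0" "local_expansion \<iota> A \<theta> (insert s F) (B * euler_const) X"
    "range X \<subseteq> (\<lambda>w. x0 + \<iota> w) ` cball 0 (C * T powr \<alpha> + euler_const * T powr \<theta>)"
proof -
  have "finite (insert s F)" "s \<in> insert s F" "\<And>t. t \<in> insert s F \<Longrightarrow> s \<le> t" using assms(3,4) by auto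
  then obtain n :: nat and g where g: "strict_mono_on {..n} g" "g ` {..n} = insert s F" "g 0 = s"
    by (rule finite_strict_mono_enumeration)
  define y where "y = euler_scheme A \<iota> x0 g"
  define X where "X t = (if t \<in> g ` {..n} then x0 + \<iota> (y (the_inv_into {..n} g t)) else x0)" for t
  have x: "X (g k) = x0 + \<iota> (y k)" if "k \<le> n" for k
    using that the_inv_into_f_f[OF strict_mono_on_imp_inj_on[OF g(1)]] unfolding X_def by auto
  have y: "y (Suc k) = y k + (A (g (Suc k)) (X (g k)) - A (g k) (X (g k)))" if "k < n" for k
    using x that unfolding y_def by simp
  have "g ` {..n} \<subseteq> {0..T}" using g(2) assms by auto
  have remainder: "norm (y k - y i - (A (g k) (X (g i)) - A (g i) (X (g i)))) \<le> euler_const * (g k - g i) powr \<theta>"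
    if "i < k" "k \<le> n" for i k
    by (rule euler_remainder_bound[OF g(1) \<open>g ` {..n} \<subseteq> {0..T}\<close>, where x = X and y = y])
      (use x y that in auto)
  have "X t \<in> (\<lambda>w. x0 + \<iota> w) ` cball 0 (C * T powr \<alpha> + euler_const * T powr \<theta>)" for t
  proof (cases "t \<in> g ` {..n}")
    case True
    then obtain k where "k \<le> n" "t = g k" by auto
    moreover have "norm (y k - y 0) \<le> C * T powr \<alpha> + euler_const * T powr \<theta>"
      by (rule euler_increment_bound[OF g(1) \<open>g ` {..n} \<subseteq> {0..T}\<close>, where x = X and y = y])
        (use x y \<open>k \<le> n\<close> in auto)
    ultimately show ?thesis using x by (auto simp: y_def)
  next
    case False
    then have "X t = x0 + \<iota> 0" unfolding X_def using linear_0[OF linear_\<iota>] by simp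
    then show ?thesis using C_nonneg euler_const_nonneg by auto
  qed
  moreover have "X s = x0" using x[of 0] g(3) linear_0[OF linear_\<iota>] by (simp add: y_def)
  moreover have "local_expansion \<iota> A \<theta> (g ` {..n}) (B * euler_const) X"
    by (rule local_expansion_of_grid[OF g(1), where y = y]) (use x remainder in auto)
  ultimately show thesis using g(2) by (intro that) auto
qed

end

section \<open>Existence of a solution\<close>

lemma compact_Pi_UNIV:
  fixes K :: "'b::topological_space set"
  assumes "compact K"
  shows "compact (UNIV \<rightarrow> K)"
proof -
  have "compactin (product_topology (\<lambda>_. euclidean) UNIV) (PiE (UNIV :: 'a set) (\<lambda>_. K))"
    using assms by (simp add: compactin_PiE)
  then show ?thesis unfolding euclidean_product_topology by (simp add: PiE_UNIV_domain)
qed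

lemma cluster_point_in_closed:
  assumes "closed Z" "eventually (\<lambda>x. x \<in> Z) F" "inf (nhds a) F \<noteq> bot"
  shows "a \<in> Z"
proof (rule ccontr)
  assume "a \<notin> Z"
  then have "eventually (\<lambda>x. x \<in> - Z) (nhds a)" using assms(1) by (intro eventually_nhds_in_open) auto
  then have "eventually (\<lambda>x. x \<in> - Z \<and> x \<in> Z) (inf (nhds a) F)"
    using assms(2) by (intro eventually_conj filter_leD[OF inf_le1] filter_leD[OF inf_le2])
  then show False using assms(3) by (simp add: eventually_False[symmetric])
qed

lemma linear_image_cball_in_compact:
  fixes \<iota> :: "'a::real_normed_vector \<Rightarrow> 'b::real_normed_vector"
  assumes "linear \<iota>" "compact (closure (\<iota> ` ball 0 1))"
  obtains K where "compact K" "(\<lambda>w. x0 + \<iota> w) ` cball 0 R \<subseteq> K"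
proof
  let ?r = "\<bar>R\<bar> + 1"
  show "compact ((\<lambda>v. x0 + ?r *\<^sub>R v) ` closure (\<iota> ` ball 0 1))"
    by (intro compact_continuous_image assms(2) continuous_intros)
  show "(\<lambda>w. x0 + \<iota> w) ` cball 0 R \<subseteq> (\<lambda>v. x0 + ?r *\<^sub>R v) ` closure (\<iota> ` ball 0 1)"
  proof clarify
    fix w :: 'a assume "w \<in> cball 0 R"
    then have "norm w < ?r" by simp
    then have "norm w / ?r < 1" by (simp add: divide_less_eq)
    then have "w /\<^sub>R ?r \<in> ball 0 1" by (simp add: divide_inverse_commute)
    then have "\<iota> (w /\<^sub>R ?r) \<in> closure (\<iota> ` ball 0 1)" by (meson closure_subset image_eqI subsetD)
    moreover have "x0 + \<iota> w = x0 + ?r *\<^sub>R \<iota> (w /\<^sub>R ?r)"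
      using assms(1) by (simp add: linear_scale)
    ultimately show "x0 + \<iota> w \<in> (\<lambda>v. x0 + ?r *\<^sub>R v) ` closure (\<iota> ` ball 0 1)" by blast
  qed
qed

context young_field
begin

lemma closed_local_expansion_constraint:
  assumes "0 \<le> u" "u \<le> v" "v \<le> T"
  shows "closed {X :: real \<Rightarrow> 'v. norm (X v - X u - \<iota> (A v (X u) - A u (X u))) \<le> c}"
proof -
  have "continuous_on UNIV (\<lambda>x. A v x - A u x)"
    using increment_holder assms \<beta>_pos by (intro holder_continuous_on[where K = "C * (v - u) powr \<alpha>"]) auto
  then have "continuous_on UNIV (\<lambda>X :: real \<Rightarrow> 'v. A v (X u) - A u (X u))"
    by (rule continuous_on_compose2[where f = "\<lambda>X. X u"]) auto
  then have "continuous_on UNIV (\<lambda>X :: real \<Rightarrow> 'v. \<iota> (A v (X u) - A u (X u)))"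
    by (rule continuous_on_compose2[OF linear_continuous_on[OF bounded_linear_\<iota>]]) auto
  then show ?thesis
    by (intro closed_Collect_le continuous_on_norm continuous_on_diff continuous_on_const) simp_all
qed

lemma solution_with_local_expansion:
  assumes "compact (closure (\<iota> ` ball 0 1))" "0 \<le> s" "s \<le> T"
  obtains f where "f s = x0" "local_expansion \<iota> A \<theta> {s..T} (B * euler_const) f"
proof -
  obtain K where "compact K" and K: "(\<lambda>w. x0 + \<iota> w) ` cball 0 (C * T powr \<alpha> + euler_const * T powr \<theta>) \<subseteq> K"
    using linear_image_cball_in_compact[OF linear_\<iota> assms(1)] .
  define good where "good G X \<longleftrightarrow>
    X s = x0 \<and> local_expansion \<iota> A \<theta> (insert s G) (B * euler_const) X \<and> X \<in> UNIV \<rightarrow> K" for G X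
  have good_mono: "good G X" if "good G' X" "G \<subseteq> G'" for G G' X
  proof -
    have "insert s G \<subseteq> insert s G'" using that(2) by blast
    then show ?thesis using that(1) unfolding good_def by (auto intro: local_expansion_subset)
  qed
  have ex: "\<exists>X. good G X" if G: "finite G" "G \<subseteq> {s..T}" for G
  proof -
    obtain X where "X s = x0" "local_expansion \<iota> A \<theta> (insert s G) (B * euler_const) X"
      and "range X \<subseteq> (\<lambda>w. x0 + \<iota> w) ` cball 0 (C * T powr \<alpha> + euler_const * T powr \<theta>)"
      using euler_approximation[OF assms(2,3) G] .
    moreover from this(3) K have "range X \<subseteq> K" by (rule order_trans)
    then have "X \<in> UNIV \<rightarrow> K" by (simp add: Pi_iff image_subset_iff)
    ultimately show ?thesis unfolding good_def by blast
  qed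
  have approx: "good G (SOME X. good G X)" if "finite G" "G \<subseteq> {s..T}" for G
    using ex[OF that] by (rule someI_ex)
  define F where "F = filtermap (\<lambda>G. SOME X. good G X) (finite_subsets_at_top {s..T})"
  have ev: "eventually (good G) F" if G: "finite G" "G \<subseteq> {s..T}" for G
  proof -
    have "good G (SOME X. good G' X)" if "finite G'" "G \<subseteq> G'" "G' \<subseteq> {s..T}" for G'
      using good_mono approx that by metis
    then show ?thesis
      unfolding F_def eventually_filtermap eventually_finite_subsets_at_top using G by (intro exI[of _ G]) simp
  qed
  have "F \<noteq> bot" unfolding F_def by (simp add: filtermap_bot_iff)
  moreover have "eventually (\<lambda>X. X \<in> UNIV \<rightarrow> K) F"
    by (rule eventually_mono[OF ev[of "{}"]]) (simp_all add: good_def)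
  ultimately obtain f where f: "inf (nhds f) F \<noteq> bot"
    using compact_Pi_UNIV[OF \<open>compact K\<close>] unfolding compact_filter by blast
  have "closed {X :: real \<Rightarrow> 'v. X s = x0}"
    by (rule closed_Collect_eq) (simp_all add: continuous_on_const)
  moreover have "eventually (\<lambda>X. X \<in> {X. X s = x0}) F"
    by (rule eventually_mono[OF ev[of "{}"]]) (simp_all add: good_def)
  ultimately have "f s = x0" using cluster_point_in_closed[OF _ _ f] by blast
  moreover have "local_expansion \<iota> A \<theta> {s..T} (B * euler_const) f"
    unfolding local_expansion_def
  proof (intro ballI impI)
    fix u v assume uv: "u \<in> {s..T}" "v \<in> {s..T}" "u < v"
    let ?Z = "{X :: real \<Rightarrow> 'v. norm (X v - X u - \<iota> (A v (X u) - A u (X u))) \<le> B * euler_const * (v - u) powr \<theta>}"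
    have "closed ?Z" using uv assms(2) by (intro closed_local_expansion_constraint) auto
    moreover have "eventually (\<lambda>X. X \<in> ?Z) F"
      by (rule eventually_mono[OF ev[of "{u, v}"]]) (use uv in \<open>auto simp: good_def local_expansion_def\<close>)
    ultimately show "norm (f v - f u - \<iota> (A v (f u) - A u (f u))) \<le> B * euler_const * (v - u) powr \<theta>"
      using cluster_point_in_closed[OF _ _ f] by blast
  qed
  ultimately show thesis by (rule that)
qed

lemma holder_path_of_local_expansion:
  assumes "0 \<le> s" "0 \<le> M" "local_expansion \<iota> A \<theta> {s..T} M f"
  shows "holder_path \<alpha> s T f"
proof -
  define H where "H = B * C + M * T powr (\<alpha> * \<beta>)"
  have "0 \<le> H" unfolding H_def using B_pos C_nonneg assms(2) by simp
  have H: "norm (f v - f u) \<le> H * \<bar>v - u\<bar> powr \<alpha>" if "u \<in> {s..T}" "v \<in> {s..T}" for u v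
    using holder_of_local_expansion[OF _ assms(2,3), of u v] holder_of_local_expansion[OF _ assms(2,3), of v u]
      that assms(1) unfolding H_def by (cases "u \<le> v") (auto simp: norm_minus_commute)
  show ?thesis
    unfolding holder_path_def
  proof (intro exI[of _ "norm (f s) + H * T powr \<alpha> + H"] ballI conjI)
    fix u v assume uv: "u \<in> {s..T}" "v \<in> {s..T}"
    have "H * \<bar>u - s\<bar> powr \<alpha> \<le> H * T powr \<alpha>"
      using uv assms(1) \<alpha>_pos \<open>0 \<le> H\<close> by (intro mult_left_mono powr_mono2) auto
    then show "norm (f u) \<le> norm (f s) + H * T powr \<alpha> + H"
      using H[of s u] uv norm_triangle_sub[of "f u" "f s"] \<open>0 \<le> H\<close> by auto
    show "norm (f v - f u) \<le> (norm (f s) + H * T powr \<alpha> + H) * \<bar>v - u\<bar> powr \<alpha>"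
      using H[OF uv] mult_right_mono[of H "norm (f s) + H * T powr \<alpha> + H" "\<bar>v - u\<bar> powr \<alpha>"] \<open>0 \<le> H\<close>
      by simp
  qed
qed

end

locale banach_young_field = young_field \<iota> A T \<alpha> \<beta> B C
  for \<iota> :: "'w::banach \<Rightarrow> 'v::real_normed_vector" and A T \<alpha> \<beta> B C
begin

lemma young_integral_of_local_expansion:
  assumes "0 \<le> s" "s \<le> t" "t \<le> T" "0 \<le> M" and f: "local_expansion \<iota> A \<theta> {s..t} M f"
  obtains I where "has_young_integral A f s t I" "f t - f s = \<iota> I"
proof -
  define \<Xi> where "\<Xi> u v = A v (f u) - A u (f u)" for u v
  have "{s..t} \<subseteq> {0..T}" using assms by auto
  have increments: "has_sewing_limit (\<lambda>u v. \<iota> (\<Xi> u v)) s t (f t - f s)"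
    using f \<open>s \<le> t\<close> young_exponent \<open>0 \<le> M\<close> unfolding local_expansion_def \<Xi>_def
    by (intro has_sewing_limit_of_increments) (auto simp: norm_minus_commute)
  obtain I where I: "has_sewing_limit \<Xi> s t I" "f t - f s = \<iota> I"
  proof (cases "s = t")
    case True
    then show thesis
      using has_sewing_limit_of_increments[of \<theta> 0 s t \<Xi> "\<lambda>_. 0"] young_exponent linear_0[OF linear_\<iota>]
      by (intro that[of 0]) auto
  next
    case False
    define H where "H = B * C + M * T powr (\<alpha> * \<beta>)"
    have "0 \<le> H" unfolding H_def using B_pos C_nonneg \<open>0 \<le> M\<close> by simp
    have "delta_bounded {s..t} \<theta> (C * H powr \<beta>) \<Xi>"
      unfolding \<Xi>_def using holder_of_local_expansion[OF \<open>{s..t} \<subseteq> {0..T}\<close> \<open>0 \<le> M\<close> f]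
      by (intro delta_bounded_of_holder[OF \<open>{s..t} \<subseteq> {0..T}\<close> \<open>0 \<le> H\<close>]) (auto simp: H_def)
    then obtain I where "has_sewing_limit \<Xi> s t I"
      using sewing_lemma[OF young_exponent] C_nonneg \<open>s \<le> t\<close> False by (metis mult_nonneg_nonneg powr_ge_zero
          order_less_le)
    moreover have "f t - f s = \<iota> I"
      using has_sewing_limit_unique[OF has_sewing_limit_bounded_linear[OF bounded_linear_\<iota>] increments]
        calculation \<open>s \<le> t\<close> False by auto
    ultimately show thesis by (rule that)
  qed
  then show thesis unfolding \<Xi>_def by (intro that) (simp_all add: has_young_integral_iff_has_sewing_limit)
qed

end

theorem mainTheorem1:
  fixes T \<alpha> \<beta> :: real
    and \<iota> :: "'w::banach \<Rightarrow> 'v::banach"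
    and A :: "real \<Rightarrow> 'v \<Rightarrow> 'w"
    and s :: real and xs :: 'v
  assumes "T > 0"
    and "0 < \<alpha>" "\<alpha> < 1" "0 < \<beta>" "\<beta> < 1" "\<alpha> * (1 + \<beta>) > 1"
    and "separable_type TYPE('v)" "separable_type TYPE('w)"
    and "compact_embedding \<iota>"
    and "holder_field T \<alpha> \<beta> A"
    and "0 \<le> s" "s < T"
  shows "\<exists>(x::real \<Rightarrow> 'v) \<gamma>. 0 < \<gamma> \<and> \<gamma> \<le> 1 \<and> \<alpha> + \<beta> * \<gamma> > 1 \<and> holder_path \<gamma> s T x \<and>
           (\<forall>t\<in>{s..T}. \<exists>I. has_young_integral A x s t I \<and> x t = xs + \<iota> I)"
proof -
  have \<iota>: "bounded_linear \<iota>" "inj \<iota>" "compact (closure (\<iota> ` ball 0 1))"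
    using assms(9) unfolding compact_embedding_def by auto
  obtain B where "0 < B" and B: "\<And>w. norm (\<iota> w) \<le> B * norm w"
    using bounded_linear.pos_bounded[OF \<iota>(1)] by (auto simp: mult.commute)
  obtain C where "0 \<le> C" and A: "\<And>u v x. 0 \<le> u \<Longrightarrow> u \<le> v \<Longrightarrow> v \<le> T \<Longrightarrow> norm (A v x - A u x) \<le> C * (v - u) powr \<alpha>"
    "\<And>u v x y. 0 \<le> u \<Longrightarrow> u \<le> v \<Longrightarrow> v \<le> T \<Longrightarrow>
      norm ((A v x - A u x) - (A v y - A u y)) \<le> C * (v - u) powr \<alpha> * norm (x - y) powr \<beta>"
    using holder_field_bounds[OF assms(10) \<iota>(2) assms(1)] by blast
  interpret banach_young_field \<iota> A T \<alpha> \<beta> B C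
    using \<iota>(1) B \<open>0 < B\<close> \<open>0 \<le> C\<close> assms(1-6) A
    by (intro banach_young_field.intro young_field.intro) (auto simp: algebra_simps)
  obtain x where x: "x s = xs" "local_expansion \<iota> A \<theta> {s..T} (B * euler_const) x"
    using solution_with_local_expansion[OF \<iota>(3) assms(11)] assms(12) by auto
  have "0 \<le> B * euler_const" using \<open>0 < B\<close> euler_const_nonneg by simp
  have "\<exists>I. has_young_integral A x s t I \<and> x t = xs + \<iota> I" if "t \<in> {s..T}" for t
    using young_integral_of_local_expansion[OF assms(11) _ _ \<open>0 \<le> B * euler_const\<close>
        local_expansion_subset[OF x(2)], of t] that x(1) by (auto simp: algebra_simps)
  then show ?thesis
    using holder_path_of_local_expansion[OF assms(11) \<open>0 \<le> B * euler_const\<close> x(2)] young_exponent assms(2,3)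
    by (intro exI[of _ x] exI[of _ \<alpha>]) (auto simp: mult.commute)
qed

end
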